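(* Assume $2\mu\bar c>\sigma^2 r$. There is a constant $K>0$, independent of $n$ and $i$, such that for every $n\in\mathbb N$ the solution $v_0,\dots,v_n$ of the regime-switching system satisfies $0\le v_i'\le K$ on $[0,\infty)$ for $i=0,\dots,n$.
   Context: Constants: $\mu\in\mathbb R$, $\sigma>0$, $r>0$, $\bar c\in(0,\mu]$, $b\in[0,1]$. Operators: $\mathcal L w=\tfrac12\sigma^2w''+\mu w'-rw$, $\mathcal T w=b(1-w')+(1-b)(1-w')^+$. Regime-switching system: for $n\in\mathbb N$ let $\Delta c=\bar c/n$, $c_i=\bar c-i\Delta c$ ($i=0,\dots,n$), $v_{-1}\equiv0$; find bounded functions $v_0,\dots,v_n$ on $[0,\infty)$, $v_i\in W^2_{p,\mathrm{loc}}([0,\infty))$ for all $p>1$, with $\min\{-\mathcal Lv_i-c_i\,\mathcal Tv_i,\ v_i-v_{i-1}\}=0$ a.e. on $(0,\infty)$ and $v_i(0)=0$, for $i=0,\dots,n$ (such a solution exists and is unique). *)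

theory Defs
  imports "HOL-Analysis.Analysis"
begin

text \<open>Sobolev regularity W^2_{p,loc}([0,\<infinity>)) for all p > 1, in one dimension:
  v is differentiable on [0,\<infinity>) (one-sided at 0) with derivative v',
  v' is locally absolutely continuous with weak derivative v'', and
  v'' is locally p-integrable on [0,\<infinity>) for every p > 1.\<close>
definition W2p_loc :: "(real \<Rightarrow> real) \<Rightarrow> (real \<Rightarrow> real) \<Rightarrow> (real \<Rightarrow> real) \<Rightarrow> bool" where
  "W2p_loc v v' v'' \<longleftrightarrow>
     (\<forall>x\<ge>0. (v has_real_derivative v' x) (at x within {0..})) \<and>
     (\<forall>a b. 0 \<le> a \<longrightarrow> a \<le> b \<longrightarrow>
        set_integrable lborel {a..b} v'' \<and>
        v' b - v' a = set_lebesgue_integral lborel {a..b} v'') \<and>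
     (\<forall>p>1. \<forall>b\<ge>0. set_integrable lborel {0..b} (\<lambda>x. \<bar>v'' x\<bar> powr p))"

definition opL :: "real \<Rightarrow> real \<Rightarrow> real \<Rightarrow> real \<Rightarrow> real \<Rightarrow> real \<Rightarrow> real" where
  "opL \<mu> \<sigma> r w w' w'' = (1/2) * \<sigma>\<^sup>2 * w'' + \<mu> * w' - r * w"

definition opT :: "real \<Rightarrow> real \<Rightarrow> real" where
  "opT b w' = b * (1 - w') + (1 - b) * max 0 (1 - w')"

definition cc :: "real \<Rightarrow> nat \<Rightarrow> nat \<Rightarrow> real" where
  "cc cbar n i = cbar - real i * (cbar / real n)"

definition regime_solution ::
  "real \<Rightarrow> real \<Rightarrow> real \<Rightarrow> real \<Rightarrow> real \<Rightarrow> nat \<Rightarrow>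
   (nat \<Rightarrow> real \<Rightarrow> real) \<Rightarrow> (nat \<Rightarrow> real \<Rightarrow> real) \<Rightarrow> (nat \<Rightarrow> real \<Rightarrow> real) \<Rightarrow> bool" where
  "regime_solution \<mu> \<sigma> r cbar b n v v' v'' \<longleftrightarrow>
     (\<forall>i\<le>n.
        bounded (v i ` {0..}) \<and>
        W2p_loc (v i) (v' i) (v'' i) \<and>
        v i 0 = 0 \<and>
        (AE x in lborel. x > 0 \<longrightarrow>
           min (- opL \<mu> \<sigma> r (v i x) (v' i x) (v'' i x) - cc cbar n i * opT b (v' i x))
               (v i x - (if i = 0 then 0 else v (i - 1) x)) = 0))"

end

theory Submission
  imports Defs
begin

text \<open>
  Each v_i solves an obstacle problem with obstacle v_{i-1} (and v_{-1} = 0), and a comparison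
  principle for this problem carries the following invariant from v_{i-1} to v_i: the function is
  nonnegative, nondecreasing, lies below the barrier A (1 - e^{-\<theta> x}) with A = cbar / r, and
  is (A \<theta>)-Lipschitz. The barrier is a supersolution because c T \<le> c \<le> r A, provided
  \<mu> \<theta> + r \<le> \<sigma>^2 \<theta>^2 / 2. Monotonicity follows by comparing v with
  its shift v(\<cdot> + h), and the Lipschitz bound by comparing v(\<cdot> + h) with v + A \<theta> h,
  using v(h) \<le> A (1 - e^{-\<theta> h}) \<le> A \<theta> h. Hence K = A \<theta> works for all n and i.
\<close>

lemma opT_lipschitz:
  assumes "0 \<le> b" "b \<le> 1"
  shows "\<bar>opT b x - opT b y\<bar> \<le> \<bar>x - y\<bar>"
proof -
  have "\<bar>max 0 (1 - x) - max 0 (1 - y)\<bar> \<le> \<bar>x - y\<bar>"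
    by (auto simp: max_def)
  then have "\<bar>(1 - b) * (max 0 (1 - x) - max 0 (1 - y))\<bar> \<le> (1 - b) * \<bar>x - y\<bar>"
    using assms by (simp add: abs_mult mult_left_mono)
  moreover have "\<bar>b * (y - x)\<bar> = b * \<bar>x - y\<bar>"
    using assms by (simp add: abs_mult abs_minus_commute)
  moreover have "opT b x - opT b y = b * (y - x) + (1 - b) * (max 0 (1 - x) - max 0 (1 - y))"
    unfolding opT_def by (simp add: algebra_simps)
  then have "\<bar>opT b x - opT b y\<bar>
      \<le> \<bar>b * (y - x)\<bar> + \<bar>(1 - b) * (max 0 (1 - x) - max 0 (1 - y))\<bar>"
    by (metis abs_triangle_ineq)
  moreover have "b * \<bar>x - y\<bar> + (1 - b) * \<bar>x - y\<bar> = \<bar>x - y\<bar>"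
    by (simp add: algebra_simps)
  ultimately show ?thesis
    by linarith
qed

lemma opT_le_1:
  assumes "0 \<le> b" "b \<le> 1" "0 \<le> x"
  shows "opT b x \<le> 1"
  using assms mult_left_mono[of "1 - x" 1 b] mult_left_mono[of "max 0 (1 - x)" 1 "1 - b"]
  unfolding opT_def by simp

lemma continuous_on_opT [continuous_intros]:
  "continuous_on S f \<Longrightarrow> continuous_on S (\<lambda>t. opT b (f t))"
  unfolding opT_def by (intro continuous_intros)

lemma continuous_AE_nonneg_imp_nonneg:
  fixes f :: "real \<Rightarrow> real"
  assumes "continuous_on {0<..} f" and "AE x in lborel. x > 0 \<longrightarrow> 0 \<le> f x" and "x > 0"
  shows "0 \<le> f x"
proof (rule ccontr)
  assume "\<not> 0 \<le> f x"
  then have "f x < 0"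
    by simp
  moreover have "isCont f x"
    using assms(1,3) by (simp add: continuous_on_eq_continuous_at)
  ultimately have "\<forall>\<^sub>F y in at x. f y < 0"
    by (metis order_tendstoD(2) isCont_def)
  then obtain d where "d > 0" and neg: "\<And>y. y \<noteq> x \<Longrightarrow> dist y x < d \<Longrightarrow> f y < 0"
    by (auto simp: eventually_at)
  have "AE y in lborel. y \<notin> {x<..<x + d}"
    using assms(2)
  proof eventually_elim
    case (elim y)
    show ?case
      using elim neg[of y] assms(3) by (auto simp: dist_real_def)
  qed
  then have "emeasure lborel {x<..<x + d} = 0"
    by (subst (asm) AE_iff_measurable[of "{x<..<x + d}"]) auto
  with \<open>d > 0\<close> show False
    by simp
qed

lemma W2p_loc_has_real_derivative:
  assumes "W2p_loc v v' v''" and "x > 0"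
  shows "(v has_real_derivative v' x) (at x)"
proof -
  have "(v has_real_derivative v' x) (at x within {0..})"
    using assms unfolding W2p_loc_def by simp
  moreover have "x \<in> interior {0..}"
    using assms(2) by simp
  ultimately show ?thesis
    by (metis at_within_interior)
qed

lemma W2p_loc_continuous_on:
  assumes "W2p_loc v v' v''"
  shows "continuous_on {0..} v"
proof -
  have "\<forall>x\<in>{0..}. continuous (at x within {0..}) v"
    using assms unfolding W2p_loc_def by (auto intro: DERIV_continuous)
  then show ?thesis
    by (simp add: continuous_on_eq_continuous_within)
qed

lemma W2p_loc_continuous_on_deriv:
  assumes "W2p_loc v v' v''"
  shows "continuous_on {0<..} v'"
proof -
  have "continuous_on {0..b} v'" if "b \<ge> 0" for b
  proof -
    have "v'' integrable_on {0..b}"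
      using assms that set_borel_integral_eq_integral(1) unfolding W2p_loc_def by blast
    then have "continuous_on {0..b} (\<lambda>x. v' 0 + integral {0..x} v'')"
      by (intro continuous_intros indefinite_integral_continuous_1)
    moreover have "v' x = v' 0 + integral {0..x} v''" if "x \<in> {0..b}" for x
    proof -
      have "set_integrable lborel {0..x} v''" "v' x - v' 0 = set_lebesgue_integral lborel {0..x} v''"
        using assms that unfolding W2p_loc_def by auto
      then show ?thesis
        using set_borel_integral_eq_integral(2) by fastforce
    qed
    ultimately show ?thesis
      by (metis (no_types, lifting) continuous_on_cong)
  qed
  then have "isCont v' x" if "x > 0" for x
  proof -
    have "continuous_on {0<..<x + 1} v'"
      by (rule continuous_on_subset[of "{0..x + 1}"]) (use that \<open>\<And>b. b \<ge> 0 \<Longrightarrow> _\<close> in auto)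
    then show ?thesis
      using that by (simp add: continuous_on_eq_continuous_at)
  qed
  then show ?thesis
    by (simp add: continuous_at_imp_continuous_on)
qed

lemma W2p_loc_continuous_on_Icc:
  assumes "W2p_loc v v' v''" and "0 < x"
  shows "continuous_on {x..y} v" and "continuous_on {x..y} v'"
proof -
  have "{x..y} \<subseteq> {0..}" "{x..y} \<subseteq> {0<..}"
    using assms(2) by auto
  then show "continuous_on {x..y} v" "continuous_on {x..y} v'"
    using W2p_loc_continuous_on[OF assms(1)] W2p_loc_continuous_on_deriv[OF assms(1)]
    by (meson continuous_on_subset)+
qed

lemma W2p_loc_deriv_diff_le:
  assumes "W2p_loc v v' v''" and "0 \<le> x" "x \<le> y" and "continuous_on {x..y} B"
    and "AE t in lborel. t \<in> {x..y} \<longrightarrow> v'' t \<le> B t"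
  shows "v' y - v' x \<le> integral {x..y} B"
proof -
  have v'': "set_integrable lborel {x..y} v''" and "v' y - v' x = (LINT t:{x..y}|lborel. v'' t)"
    using assms(1-3) unfolding W2p_loc_def by auto
  moreover have B: "set_integrable lborel {x..y} B"
    using assms(4) by (rule borel_integrable_atLeastAtMost')
  moreover have "(LINT t:{x..y}|lborel. v'' t) \<le> (LINT t:{x..y}|lborel. B t)"
    by (rule set_integral_mono_AE[OF v'' B]) (use assms(5) in auto)
  ultimately show ?thesis
    using set_borel_integral_eq_integral(2)[OF B] by simp
qed

lemma W2p_loc_deriv_diff_ge:
  assumes "W2p_loc v v' v''" and "0 \<le> x" "x \<le> y" and "continuous_on {x..y} B"
    and "AE t in lborel. t \<in> {x..y} \<longrightarrow> B t \<le> v'' t"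
  shows "integral {x..y} B \<le> v' y - v' x"
proof -
  have v'': "set_integrable lborel {x..y} v''" and "v' y - v' x = (LINT t:{x..y}|lborel. v'' t)"
    using assms(1-3) unfolding W2p_loc_def by auto
  moreover have B: "set_integrable lborel {x..y} B"
    using assms(4) by (rule borel_integrable_atLeastAtMost')
  moreover have "(LINT t:{x..y}|lborel. B t) \<le> (LINT t:{x..y}|lborel. v'' t)"
    by (rule set_integral_mono_AE[OF B v'']) (use assms(5) in auto)
  ultimately show ?thesis
    using set_borel_integral_eq_integral(2)[OF B] by simp
qed

lemma obstacle_le_solution:
  assumes v: "W2p_loc v v' v''" and "v 0 = 0"
    and obstacle: "AE x in lborel. x > 0 \<longrightarrow> 0 \<le> v x - g x"
    and "continuous_on {0<..} g" and "g 0 \<le> 0" and "0 \<le> x"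
  shows "g x \<le> v x"
proof (cases "x = 0")
  case False
  have "continuous_on {0<..} (\<lambda>x. v x - g x)"
    using W2p_loc_continuous_on[OF v] \<open>continuous_on {0<..} g\<close>
    by (intro continuous_intros) (auto intro: continuous_on_subset)
  then show ?thesis
    using continuous_AE_nonneg_imp_nonneg[OF _ obstacle] False \<open>0 \<le> x\<close> by simp
qed (use assms in simp)

definition bounded_C1 :: "(real \<Rightarrow> real) \<Rightarrow> (real \<Rightarrow> real) \<Rightarrow> bool" where
  "bounded_C1 u u' \<longleftrightarrow> bounded (u ` {0..}) \<and> continuous_on {0..} u \<and>
     (\<forall>x>0. (u has_real_derivative u' x) (at x)) \<and> continuous_on {0<..} u'"

lemma W2p_loc_bounded_C1:
  "W2p_loc v v' v'' \<Longrightarrow> bounded (v ` {0..}) \<Longrightarrow> bounded_C1 v v'"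
  unfolding bounded_C1_def
  by (simp add: W2p_loc_has_real_derivative W2p_loc_continuous_on W2p_loc_continuous_on_deriv)

lemma bounded_C1_shift:
  assumes "bounded_C1 u u'" and "0 \<le> h"
  shows "bounded_C1 (\<lambda>x. u (x + h)) (\<lambda>x. u' (x + h))"
proof -
  have shift: "(\<lambda>x. x + h) ` {0..} \<subseteq> {0..}" "(\<lambda>x. x + h) ` {0<..} \<subseteq> {0<..}"
    using assms(2) by auto
  have "bounded (u ` (\<lambda>x. x + h) ` {0..})"
    using assms(1) shift(1) unfolding bounded_C1_def by (meson bounded_subset image_mono)
  moreover have "((\<lambda>x. u (x + h)) has_real_derivative u' (x + h)) (at x)" if "x > 0" for x
  proof -
    have "(u has_real_derivative u' (x + h)) (at (x + h))"
      using assms that unfolding bounded_C1_def by simp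
    from DERIV_chain2[OF this DERIV_add[OF DERIV_ident DERIV_const[of h]]] show ?thesis
      by simp
  qed
  moreover have "continuous_on {0..} (\<lambda>x. u (x + h))"
    by (rule continuous_on_compose2[of "{0..}" u])
      (use assms(1) shift(1) in \<open>auto simp: bounded_C1_def intro: continuous_intros\<close>)
  moreover have "continuous_on {0<..} (\<lambda>x. u' (x + h))"
    by (rule continuous_on_compose2[of "{0<..}" u'])
      (use assms(1) shift(2) in \<open>auto simp: bounded_C1_def intro: continuous_intros\<close>)
  ultimately show ?thesis
    unfolding bounded_C1_def image_image by blast
qed

lemma bounded_C1_add_const:
  assumes "bounded_C1 u u'"
  shows "bounded_C1 (\<lambda>x. u x + k) u'"
  unfolding bounded_C1_def
proof (intro conjI allI impI)
  have "(\<lambda>_. k) ` {0 :: real..} = {k}"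
    by (rule image_constant[of 0]) simp
  then show "bounded ((\<lambda>x. u x + k) ` {0..})"
    using assms bounded_plus_comp[of u "{0..}" "\<lambda>_. k"] unfolding bounded_C1_def by simp
  show "continuous_on {0..} (\<lambda>x. u x + k)"
    using assms continuous_on_add[OF _ continuous_on_const] unfolding bounded_C1_def by blast
  show "((\<lambda>x. u x + k) has_real_derivative u' x) (at x)" if "0 < x" for x
  proof -
    have "(u has_real_derivative u' x) (at x)"
      using assms that unfolding bounded_C1_def by simp
    from DERIV_add[OF this DERIV_const[of k]] show ?thesis
      by simp
  qed
  show "continuous_on {0<..} u'"
    using assms unfolding bounded_C1_def by simp
qed

lemma bounded_C1_continuous_on_Icc:
  assumes "bounded_C1 u u'" and "0 < x"
  shows "continuous_on {x..y} u" and "continuous_on {x..y} u'"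
proof -
  have "{x..y} \<subseteq> {0..}" "{x..y} \<subseteq> {0<..}"
    using assms(2) by auto
  then show "continuous_on {x..y} u" "continuous_on {x..y} u'"
    using assms(1) unfolding bounded_C1_def by (meson continuous_on_subset)+
qed

lemma penalized_maximum:
  fixes D D' :: "real \<Rightarrow> real"
  assumes cont: "continuous_on {0..} D" and bdd: "bdd_above (D ` {0..})"
    and deriv: "\<And>x. x > 0 \<Longrightarrow> (D has_real_derivative D' x) (at x)"
    and "D 0 \<le> 0" and "0 \<le> x0" and "0 < D x0" and "0 < \<epsilon>" and "\<epsilon> * x0 \<le> D x0 / 2"
  obtains xs where "0 < xs" and "D x0 / 2 \<le> D xs" and "D' xs = \<epsilon>"
    and "\<And>y. 0 \<le> y \<Longrightarrow> D y - \<epsilon> * y \<le> D xs - \<epsilon> * xs"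
proof -
  obtain B where B: "\<And>y. 0 \<le> y \<Longrightarrow> D y \<le> B"
    using bdd by (auto simp: bdd_above_def)
  define F where "F y = D y - \<epsilon> * y" for y
  define R where "R = max x0 (B / \<epsilon>)"
  have "continuous_on {0..R} D"
    by (rule continuous_on_subset[OF cont]) auto
  then have "continuous_on {0..R} F"
    unfolding F_def by (intro continuous_intros)
  moreover have "{0..R} \<noteq> {}"
    using \<open>0 \<le> x0\<close> unfolding R_def by simp
  ultimately obtain xs where xs: "xs \<in> {0..R}" and max: "\<And>y. y \<in> {0..R} \<Longrightarrow> F y \<le> F xs"
    using continuous_attains_sup[of "{0..R}" F] by blast
  have Fxs: "D x0 / 2 \<le> F xs"
    using max[of x0] assms(5,8) unfolding R_def F_def by auto
  have global: "F y \<le> F xs" if "0 \<le> y" for y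
  proof (cases "y \<le> R")
    case False
    then have "B / \<epsilon> < y"
      unfolding R_def by simp
    then have "B < \<epsilon> * y"
      using \<open>0 < \<epsilon>\<close> by (metis mult.commute pos_divide_less_eq)
    then show ?thesis
      using B[OF that] Fxs \<open>0 < D x0\<close> unfolding F_def by linarith
  qed (use max that in auto)
  have "0 < xs"
    using xs Fxs assms(4,6) unfolding F_def by (cases "xs = 0") auto
  moreover have "D x0 / 2 \<le> D xs"
    using Fxs \<open>0 < \<epsilon>\<close> \<open>0 < xs\<close> unfolding F_def by (smt (verit) mult_pos_pos)
  moreover have "D' xs - \<epsilon> = 0"
  proof (rule DERIV_local_max)
    show "(F has_real_derivative D' xs - \<epsilon>) (at xs)"
      unfolding F_def using deriv[OF \<open>0 < xs\<close>] by (auto intro!: derivative_eq_intros)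
    show "\<forall>y. \<bar>xs - y\<bar> < xs \<longrightarrow> F y \<le> F xs"
      using global by auto
  qed fact
  ultimately show ?thesis
    using that global unfolding F_def by auto
qed

lemma isCont_pos_right_interval:
  fixes f :: "real \<Rightarrow> real"
  assumes "isCont f x" and "0 < f x"
  obtains y where "x < y" and "\<And>t. x \<le> t \<Longrightarrow> t < y \<Longrightarrow> 0 < f t"
proof -
  have "\<forall>\<^sub>F t in at x. 0 < f t"
    using assms unfolding isCont_def by (rule order_tendstoD(1))
  then have "\<forall>\<^sub>F t in at_right x. 0 < f t"
    by (rule filter_leD[OF at_le, rotated]) simp
  then obtain y where "x < y" and "\<And>t. x < t \<Longrightarrow> t < y \<Longrightarrow> 0 < f t"
    by (auto simp: eventually_at_right_field)
  with assms(2) show ?thesis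
    using that by (metis order_le_less)
qed

locale hjb_equation =
  fixes \<mu> \<sigma> r b c :: real
  assumes sigma_pos: "0 < \<sigma>" and r_pos: "0 < r" and b_nonneg: "0 \<le> b" and b_le_1: "b \<le> 1"
    and c_nonneg: "0 \<le> c"
begin

text \<open>The value of w'' for which -L w - c T w = 0.\<close>
definition rhs :: "real \<Rightarrow> real \<Rightarrow> real" where
  "rhs w w' = 2 / \<sigma>\<^sup>2 * (r * w - \<mu> * w' - c * opT b w')"

lemma supersolution_pointwise_iff:
  "0 \<le> - opL \<mu> \<sigma> r w w' w'' - c * opT b w' \<longleftrightarrow> w'' \<le> rhs w w'"
  using sigma_pos unfolding opL_def rhs_def by (simp add: field_simps)

lemma subsolution_pointwise_iff:
  "- opL \<mu> \<sigma> r w w' w'' - c * opT b w' \<le> 0 \<longleftrightarrow> rhs w w' \<le> w''"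
  using sigma_pos unfolding opL_def rhs_def by (simp add: field_simps)

lemma rhs_mono: "w1 \<le> w2 \<Longrightarrow> rhs w1 w' \<le> rhs w2 w'"
  using r_pos mult_left_mono[of w1 w2 r] unfolding rhs_def by (intro mult_left_mono) auto

lemma continuous_on_rhs [continuous_intros]:
  "continuous_on S f \<Longrightarrow> continuous_on S f' \<Longrightarrow> continuous_on S (\<lambda>t. rhs (f t) (f' t))"
  unfolding rhs_def by (intro continuous_intros)

lemma rhs_diff_lower_bound:
  "2 / \<sigma>\<^sup>2 * (r * (u - w) - (\<bar>\<mu>\<bar> + c) * \<bar>u' - w'\<bar>) \<le> rhs u u' - rhs w w'"
proof -
  have "\<mu> * (u' - w') \<le> \<bar>\<mu>\<bar> * \<bar>u' - w'\<bar>"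
    by (metis abs_ge_self abs_mult)
  moreover have "c * (opT b u' - opT b w') \<le> c * \<bar>u' - w'\<bar>"
    using opT_lipschitz[OF b_nonneg b_le_1, of u' w'] c_nonneg by (intro mult_left_mono) auto
  ultimately have "r * (u - w) - (\<bar>\<mu>\<bar> + c) * \<bar>u' - w'\<bar>
      \<le> (r * u - \<mu> * u' - c * opT b u') - (r * w - \<mu> * w' - c * opT b w')"
    by (simp only: ring_distribs)
  then have "2 / \<sigma>\<^sup>2 * (r * (u - w) - (\<bar>\<mu>\<bar> + c) * \<bar>u' - w'\<bar>)
      \<le> 2 / \<sigma>\<^sup>2 * ((r * u - \<mu> * u' - c * opT b u') - (r * w - \<mu> * w' - c * opT b w'))"
    by (rule mult_left_mono) simp
  then show ?thesis
    unfolding rhs_def by (simp only: right_diff_distrib)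
qed

text \<open>Second-order inequalities are used in integrated form, which treats Sobolev solutions and
  smooth barriers alike.\<close>
definition supersolution :: "(real \<Rightarrow> real) \<Rightarrow> (real \<Rightarrow> real) \<Rightarrow> bool" where
  "supersolution W W' \<longleftrightarrow>
     (\<forall>x y. 0 < x \<longrightarrow> x \<le> y \<longrightarrow> W' y - W' x \<le> integral {x..y} (\<lambda>t. rhs (W t) (W' t)))"

definition subsolution_above :: "(real \<Rightarrow> real) \<Rightarrow> (real \<Rightarrow> real) \<Rightarrow> (real \<Rightarrow> real) \<Rightarrow> bool" where
  "subsolution_above g u u' \<longleftrightarrow>
     (\<forall>x y. 0 < x \<longrightarrow> x \<le> y \<longrightarrow> (\<forall>t\<in>{x..y}. g t < u t) \<longrightarrow>
        integral {x..y} (\<lambda>t. rhs (u t) (u' t)) \<le> u' y - u' x)"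

lemma W2p_loc_supersolution_add_const:
  assumes v: "W2p_loc v v' v''"
    and super: "AE x in lborel. x > 0 \<longrightarrow> 0 \<le> - opL \<mu> \<sigma> r (v x) (v' x) (v'' x) - c * opT b (v' x)"
    and "0 \<le> k"
  shows "supersolution (\<lambda>x. v x + k) v'"
  unfolding supersolution_def
proof (intro allI impI)
  fix x y :: real
  assume "0 < x" "x \<le> y"
  have "continuous_on {x..y} v" "continuous_on {x..y} v'"
    using W2p_loc_continuous_on_Icc[OF v \<open>0 < x\<close>] by auto
  moreover have "AE t in lborel. t \<in> {x..y} \<longrightarrow> v'' t \<le> rhs (v t + k) (v' t)"
    using super
  proof eventually_elim
    case (elim t)
    show ?case
    proof
      assume "t \<in> {x..y}"
      with elim \<open>0 < x\<close> have "0 \<le> - opL \<mu> \<sigma> r (v t) (v' t) (v'' t) - c * opT b (v' t)"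
        by auto
      then have "v'' t \<le> rhs (v t) (v' t)"
        unfolding supersolution_pointwise_iff .
      also have "\<dots> \<le> rhs (v t + k) (v' t)"
        using \<open>0 \<le> k\<close> by (intro rhs_mono) simp
      finally show "v'' t \<le> rhs (v t + k) (v' t)" .
    qed
  qed
  ultimately show "v' y - v' x \<le> integral {x..y} (\<lambda>t. rhs (v t + k) (v' t))"
    using \<open>0 < x\<close> \<open>x \<le> y\<close>
    by (intro W2p_loc_deriv_diff_le[OF v]) (auto intro!: continuous_intros)
qed

lemma W2p_loc_subsolution_above:
  assumes v: "W2p_loc v v' v''"
    and sub: "AE x in lborel. x > 0 \<longrightarrow> g x < v x \<longrightarrow>
      - opL \<mu> \<sigma> r (v x) (v' x) (v'' x) - c * opT b (v' x) \<le> 0"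
  shows "subsolution_above g v v'"
  unfolding subsolution_above_def
proof (intro allI impI)
  fix x y :: real
  assume "0 < x" "x \<le> y" and above: "\<forall>t\<in>{x..y}. g t < v t"
  have "continuous_on {x..y} v" "continuous_on {x..y} v'"
    using W2p_loc_continuous_on_Icc[OF v \<open>0 < x\<close>] by auto
  moreover have "AE t in lborel. t \<in> {x..y} \<longrightarrow> rhs (v t) (v' t) \<le> v'' t"
    using sub
  proof eventually_elim
    case (elim t)
    show ?case
    proof
      assume "t \<in> {x..y}"
      with elim \<open>0 < x\<close> above have "- opL \<mu> \<sigma> r (v t) (v' t) (v'' t) - c * opT b (v' t) \<le> 0"
        by auto
      then show "rhs (v t) (v' t) \<le> v'' t"
        unfolding subsolution_pointwise_iff .
    qed
  qed
  ultimately show "integral {x..y} (\<lambda>t. rhs (v t) (v' t)) \<le> v' y - v' x"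
    using \<open>0 < x\<close> \<open>x \<le> y\<close>
    by (intro W2p_loc_deriv_diff_ge[OF v]) (auto intro!: continuous_intros)
qed

lemma obstacle_problem_sub_super:
  assumes v: "W2p_loc v v' v''"
    and obstacle: "AE x in lborel. x > 0 \<longrightarrow>
      min (- opL \<mu> \<sigma> r (v x) (v' x) (v'' x) - c * opT b (v' x)) (v x - g x) = 0"
  shows "subsolution_above g v v'" and "\<And>k. 0 \<le> k \<Longrightarrow> supersolution (\<lambda>x. v x + k) v'"
proof -
  have "AE x in lborel. x > 0 \<longrightarrow> g x < v x \<longrightarrow>
      - opL \<mu> \<sigma> r (v x) (v' x) (v'' x) - c * opT b (v' x) \<le> 0"
    using obstacle by eventually_elim (auto simp: min_def split: if_splits)
  then show "subsolution_above g v v'"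
    by (rule W2p_loc_subsolution_above[OF v])
  have "AE x in lborel. x > 0 \<longrightarrow> 0 \<le> - opL \<mu> \<sigma> r (v x) (v' x) (v'' x) - c * opT b (v' x)"
    using obstacle by eventually_elim (auto simp: min_def split: if_splits)
  then show "supersolution (\<lambda>x. v x + k) v'" if "0 \<le> k" for k
    using W2p_loc_supersolution_add_const[OF v _ that] by blast
qed

lemma supersolution_shift:
  assumes "supersolution W W'" and "0 \<le> h"
  shows "supersolution (\<lambda>x. W (x + h)) (\<lambda>x. W' (x + h))"
  unfolding supersolution_def
proof (intro allI impI)
  fix x y :: real
  assume "0 < x" "x \<le> y"
  have "integral {x..y} (\<lambda>t. rhs (W (t + h)) (W' (t + h)))
      = integral {x + h..y + h} (\<lambda>t. rhs (W t) (W' t))"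
    using integral_shift_Icc_real[of x y "\<lambda>t. rhs (W t) (W' t)" h] by (simp add: comp_def add.commute)
  then show "W' (y + h) - W' (x + h) \<le> integral {x..y} (\<lambda>t. rhs (W (t + h)) (W' (t + h)))"
    using assms \<open>0 < x\<close> \<open>x \<le> y\<close> unfolding supersolution_def by simp
qed

lemma subsolution_above_shift:
  assumes "subsolution_above g u u'" and "0 \<le> h"
  shows "subsolution_above (\<lambda>x. g (x + h)) (\<lambda>x. u (x + h)) (\<lambda>x. u' (x + h))"
  unfolding subsolution_above_def
proof (intro allI impI)
  fix x y :: real
  assume "0 < x" "x \<le> y" and above: "\<forall>t\<in>{x..y}. g (t + h) < u (t + h)"
  have "\<forall>t\<in>{x + h..y + h}. g t < u t"
    using above[rule_format, of "_ - h"] by auto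
  moreover have "integral {x..y} (\<lambda>t. rhs (u (t + h)) (u' (t + h)))
      = integral {x + h..y + h} (\<lambda>t. rhs (u t) (u' t))"
    using integral_shift_Icc_real[of x y "\<lambda>t. rhs (u t) (u' t)" h] by (simp add: comp_def add.commute)
  ultimately show "integral {x..y} (\<lambda>t. rhs (u (t + h)) (u' (t + h))) \<le> u' (y + h) - u' (x + h)"
    using assms \<open>0 < x\<close> \<open>x \<le> y\<close> unfolding subsolution_above_def by simp
qed

lemma deriv_gap_grows:
  assumes sub: "subsolution_above g u u'" and super: "supersolution W W'"
    and u: "bounded_C1 u u'" and W: "bounded_C1 W W'"
    and "0 < x" "x \<le> y" and above: "\<And>t. t \<in> {x..y} \<Longrightarrow> g t < u t"
    and gap: "\<And>t. t \<in> {x..y} \<Longrightarrow> \<kappa> \<le> rhs (u t) (u' t) - rhs (W t) (W' t)"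
  shows "u' x - W' x + \<kappa> * (y - x) \<le> u' y - W' y"
proof -
  have cont: "continuous_on {x..y} (\<lambda>t. rhs (u t) (u' t))" "continuous_on {x..y} (\<lambda>t. rhs (W t) (W' t))"
    using bounded_C1_continuous_on_Icc[OF u \<open>0 < x\<close>] bounded_C1_continuous_on_Icc[OF W \<open>0 < x\<close>]
    by (auto intro: continuous_on_rhs)
  have "\<kappa> * (y - x) = integral {x..y} (\<lambda>t. \<kappa>)"
    using \<open>x \<le> y\<close> by simp
  also have "\<dots> \<le> integral {x..y} (\<lambda>t. rhs (u t) (u' t) - rhs (W t) (W' t))"
    using cont gap by (intro integral_le integrable_continuous_interval continuous_on_diff) auto
  also have "\<dots> = integral {x..y} (\<lambda>t. rhs (u t) (u' t)) - integral {x..y} (\<lambda>t. rhs (W t) (W' t))"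
    using cont by (intro integral_diff integrable_continuous_interval)
  also have "\<dots> \<le> (u' y - u' x) - (W' y - W' x)"
    using sub super \<open>0 < x\<close> \<open>x \<le> y\<close> above
    unfolding subsolution_above_def supersolution_def by (intro diff_mono) auto
  finally show ?thesis
    by simp
qed

lemma deriv_gap_increases_right:
  assumes sub: "subsolution_above g u u'" and super: "supersolution W W'"
    and u: "bounded_C1 u u'" and W: "bounded_C1 W W'" and g_le_W: "\<And>x. 0 \<le> x \<Longrightarrow> g x \<le> W x"
    and "0 < xs" and "W xs < u xs" and "rhs (W xs) (W' xs) < rhs (u xs) (u' xs)"
  obtains y where "xs < y" and "\<And>t. xs < t \<Longrightarrow> t < y \<Longrightarrow> u' xs - W' xs < u' t - W' t"
proof -
  define \<kappa> where "\<kappa> = rhs (u xs) (u' xs) - rhs (W xs) (W' xs)"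
  define H where "H t = min (u t - W t) (rhs (u t) (u' t) - rhs (W t) (W' t) - \<kappa> / 2)" for t
  have "continuous_on {0<..} H"
    using u W unfolding H_def bounded_C1_def by (auto intro!: continuous_intros intro: continuous_on_subset)
  then have "isCont H xs"
    using \<open>0 < xs\<close> by (simp add: continuous_on_eq_continuous_at)
  moreover have "0 < H xs"
    using assms(7,8) unfolding H_def \<kappa>_def by simp
  ultimately obtain y where "xs < y" and H_pos: "\<And>t. xs \<le> t \<Longrightarrow> t < y \<Longrightarrow> 0 < H t"
    using isCont_pos_right_interval by blast
  show ?thesis
  proof (rule that[OF \<open>xs < y\<close>])
    fix t
    assume "xs < t" "t < y"
    have "u' xs - W' xs + \<kappa> / 2 * (t - xs) \<le> u' t - W' t"
    proof (rule deriv_gap_grows[OF sub super u W \<open>0 < xs\<close>])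
      fix s
      assume "s \<in> {xs..t}"
      then have "0 < H s"
        using H_pos \<open>t < y\<close> by simp
      then show "g s < u s" and "\<kappa> / 2 \<le> rhs (u s) (u' s) - rhs (W s) (W' s)"
        using g_le_W[of s] \<open>0 < xs\<close> \<open>s \<in> {xs..t}\<close> unfolding H_def by auto
    qed (use \<open>xs < t\<close> in simp)
    moreover have "0 < \<kappa> / 2 * (t - xs)"
      using assms(8) \<open>xs < t\<close> unfolding \<kappa>_def by simp
    ultimately show "u' xs - W' xs < u' t - W' t"
      by linarith
  qed
qed

text \<open>If u - W were positive somewhere, then at a maximum point xs of u - W - \<epsilon> x we
  would have u' - W' = \<epsilon> while u - W is still large; the equation then forces u' - W' to
  increase to the right of xs, contradicting maximality.\<close>
lemma comparison:
  assumes u: "bounded_C1 u u'" and W: "bounded_C1 W W'"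
    and sub: "subsolution_above g u u'" and super: "supersolution W W'"
    and g_le_W: "\<And>x. 0 \<le> x \<Longrightarrow> g x \<le> W x" and "u 0 \<le> W 0" and "0 \<le> x"
  shows "u x \<le> W x"
proof (rule ccontr)
  define M where "M = u x - W x"
  define \<epsilon> where "\<epsilon> = min (M / (2 * x + 1)) (r * M / (4 * (\<bar>\<mu>\<bar> + c + 1)))"
  assume "\<not> u x \<le> W x"
  then have "0 < M"
    unfolding M_def by simp
  moreover have "0 < 2 * x + 1" "0 < 4 * (\<bar>\<mu>\<bar> + c + 1)"
    using \<open>0 \<le> x\<close> c_nonneg abs_ge_zero[of \<mu>] by simp_all
  ultimately have "0 < \<epsilon>"
    using r_pos unfolding \<epsilon>_def by simp
  have "\<epsilon> \<le> M / (2 * x + 1)"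
    unfolding \<epsilon>_def by simp
  then have "\<epsilon> * (2 * x + 1) \<le> M"
    using \<open>0 \<le> x\<close> by (simp add: pos_le_divide_eq)
  then have "\<epsilon> * x \<le> M / 2"
    using \<open>0 < \<epsilon>\<close> by (simp add: algebra_simps)
  have "\<epsilon> \<le> r * M / (4 * (\<bar>\<mu>\<bar> + c + 1))"
    unfolding \<epsilon>_def by simp
  then have "\<epsilon> * (\<bar>\<mu>\<bar> + c + 1) \<le> r * M / 4"
    using c_nonneg by (simp add: pos_le_divide_eq algebra_simps)
  then have "\<epsilon> * (\<bar>\<mu>\<bar> + c) \<le> r * M / 4"
    using \<open>0 < \<epsilon>\<close> by (simp add: algebra_simps)
  moreover have "r * M / 4 < r * (M / 2)"
    using r_pos \<open>0 < M\<close> by simp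
  ultimately have \<epsilon>_small: "\<epsilon> * (\<bar>\<mu>\<bar> + c) < r * (M / 2)"
    by linarith
  have "bdd_above ((\<lambda>t. u t - W t) ` {0..})"
    using u W unfolding bounded_C1_def by (intro bounded_imp_bdd_above bounded_minus_comp) simp_all
  then obtain xs where "0 < xs" and "M / 2 \<le> u xs - W xs" and "u' xs - W' xs = \<epsilon>"
    and max: "\<And>y. 0 \<le> y \<Longrightarrow> u y - W y - \<epsilon> * y \<le> u xs - W xs - \<epsilon> * xs"
    using penalized_maximum[of "\<lambda>t. u t - W t" "\<lambda>t. u' t - W' t" x \<epsilon>] u W \<open>u 0 \<le> W 0\<close>
      \<open>0 \<le> x\<close> \<open>0 < M\<close> \<open>0 < \<epsilon>\<close> \<open>\<epsilon> * x \<le> M / 2\<close>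
    unfolding bounded_C1_def M_def by (auto intro!: continuous_intros derivative_intros)
  have "r * (M / 2) \<le> r * (u xs - W xs)"
    using \<open>M / 2 \<le> u xs - W xs\<close> r_pos by (intro mult_left_mono) simp_all
  then have "0 < r * (u xs - W xs) - (\<bar>\<mu>\<bar> + c) * \<bar>u' xs - W' xs\<bar>"
    using \<epsilon>_small \<open>u' xs - W' xs = \<epsilon>\<close> \<open>0 < \<epsilon>\<close> by (simp add: mult.commute)
  then have "rhs (W xs) (W' xs) < rhs (u xs) (u' xs)"
    using rhs_diff_lower_bound[of "u xs" "W xs" "u' xs" "W' xs"] sigma_pos
    by (smt (verit) divide_pos_pos mult_pos_pos zero_less_power)
  moreover have "W xs < u xs"
    using \<open>M / 2 \<le> u xs - W xs\<close> \<open>0 < M\<close> by simp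
  ultimately obtain y where "xs < y" and gap: "\<And>t. xs < t \<Longrightarrow> t < y \<Longrightarrow> \<epsilon> < u' t - W' t"
    using deriv_gap_increases_right[OF sub super u W g_le_W \<open>0 < xs\<close>] \<open>u' xs - W' xs = \<epsilon>\<close>
    by metis
  have deriv: "((\<lambda>t. u t - W t - \<epsilon> * t) has_real_derivative u' s - W' s - \<epsilon>) (at s)"
    if "0 < s" for s
  proof -
    have "(u has_real_derivative u' s) (at s)" "(W has_real_derivative W' s) (at s)"
      using u W that unfolding bounded_C1_def by simp_all
    from DERIV_diff[OF DERIV_diff[OF this] DERIV_cmult[OF DERIV_ident, of \<epsilon>]] show ?thesis
      by simp
  qed
  define m where "m = (xs + y) / 2"
  have "xs < m" "m < y"
    using \<open>xs < y\<close> unfolding m_def by simp_all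
  have "\<exists>z. xs < z \<and> z < m \<and>
      (u m - W m - \<epsilon> * m) - (u xs - W xs - \<epsilon> * xs) = (m - xs) * (u' z - W' z - \<epsilon>)"
    by (rule MVT2[OF \<open>xs < m\<close>]) (use deriv \<open>0 < xs\<close> in auto)
  then obtain z where "xs < z" "z < m"
    and increment: "(u m - W m - \<epsilon> * m) - (u xs - W xs - \<epsilon> * xs) = (m - xs) * (u' z - W' z - \<epsilon>)"
    by blast
  have "0 < (m - xs) * (u' z - W' z - \<epsilon>)"
    using gap[of z] \<open>xs < z\<close> \<open>z < m\<close> \<open>m < y\<close> \<open>xs < m\<close> by simp
  then show False
    using max[of m] increment \<open>0 < xs\<close> \<open>xs < m\<close> by simp
qed

lemma solution_mono:
  assumes v: "bounded_C1 v v'" and sub: "subsolution_above g v v'" and super: "supersolution v v'"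
    and g_le_v: "\<And>x. 0 \<le> x \<Longrightarrow> g x \<le> v x" and g_mono: "\<And>x h. 0 \<le> x \<Longrightarrow> 0 \<le> h \<Longrightarrow> g x \<le> g (x + h)"
    and "v 0 \<le> v h" and "0 \<le> h" and "0 \<le> x"
  shows "v x \<le> v (x + h)"
proof (rule comparison[OF v bounded_C1_shift[OF v \<open>0 \<le> h\<close>] sub supersolution_shift[OF super \<open>0 \<le> h\<close>]])
  show "g y \<le> v (y + h)" if "0 \<le> y" for y
    using g_mono[OF that \<open>0 \<le> h\<close>] g_le_v[of "y + h"] that \<open>0 \<le> h\<close> by simp
qed (use assms in simp_all)

lemma solution_lipschitz:
  assumes v: "bounded_C1 v v'" and sub: "subsolution_above g v v'"
    and super: "supersolution (\<lambda>x. v x + k) v'"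
    and g_le_v: "\<And>x. 0 \<le> x \<Longrightarrow> g x \<le> v x" and g_lip: "\<And>x. 0 \<le> x \<Longrightarrow> g (x + h) \<le> g x + k"
    and "v h \<le> v 0 + k" and "0 \<le> h" and "0 \<le> x"
  shows "v (x + h) \<le> v x + k"
proof (rule comparison[OF bounded_C1_shift[OF v \<open>0 \<le> h\<close>] bounded_C1_add_const[OF v]
      subsolution_above_shift[OF sub \<open>0 \<le> h\<close>] super])
  show "g (y + h) \<le> v y + k" if "0 \<le> y" for y
    using g_lip[OF that] g_le_v[OF that] by simp
qed (use assms in simp_all)

end

definition barrier :: "real \<Rightarrow> real \<Rightarrow> real \<Rightarrow> real" where
  "barrier A \<theta> x = A * (1 - exp (- \<theta> * x))"

lemma barrier_le_linear:
  assumes "0 \<le> A"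
  shows "barrier A \<theta> h \<le> A * \<theta> * h"
proof -
  have "1 - exp (- \<theta> * h) \<le> \<theta> * h"
    using exp_ge_add_one_self[of "- \<theta> * h"] by simp
  then show ?thesis
    using assms mult_left_mono unfolding barrier_def by fastforce
qed

definition controlled :: "real \<Rightarrow> real \<Rightarrow> (real \<Rightarrow> real) \<Rightarrow> bool" where
  "controlled A \<theta> f \<longleftrightarrow>
     (\<forall>x\<ge>0. 0 \<le> f x) \<and> (\<forall>x\<ge>0. \<forall>h\<ge>0. f x \<le> f (x + h)) \<and>
     (\<forall>x\<ge>0. f x \<le> barrier A \<theta> x) \<and> (\<forall>x\<ge>0. \<forall>h\<ge>0. f (x + h) \<le> f x + A * \<theta> * h)"

lemma controlled_zero:
  assumes "0 \<le> A" and "0 \<le> \<theta>"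
  shows "controlled A \<theta> (\<lambda>_. 0)"
  using assms unfolding controlled_def barrier_def by simp

lemma controlled_deriv_bounds:
  assumes "controlled A \<theta> f" and "(f has_real_derivative d) (at x within {0..})" and "0 \<le> x"
  shows "0 \<le> d \<and> d \<le> A * \<theta>"
proof -
  have "(f has_real_derivative d) (at x within {x..})"
    by (rule has_field_derivative_subset[OF assms(2)]) (use assms(3) in auto)
  then have lim: "((\<lambda>y. (f y - f x) / (y - x)) \<longlongrightarrow> d) (at_right x)"
    by (simp add: has_field_derivative_iff at_within_Ici_at_right)
  have bounds: "0 \<le> (f y - f x) / (y - x) \<and> (f y - f x) / (y - x) \<le> A * \<theta>" if "x < y" for y
  proof -
    have mono: "\<forall>x\<ge>0. \<forall>h\<ge>0. f x \<le> f (x + h)"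
      and lip: "\<forall>x\<ge>0. \<forall>h\<ge>0. f (x + h) \<le> f x + A * \<theta> * h"
      using assms(1) unfolding controlled_def by blast+
    have "f x \<le> f y" "f y \<le> f x + A * \<theta> * (y - x)"
      using mono[rule_format, of x "y - x"] lip[rule_format, of x "y - x"] assms(3) that by simp_all
    then show ?thesis
      using that by (simp add: pos_divide_le_eq)
  qed
  have "\<forall>\<^sub>F y in at_right x. 0 \<le> (f y - f x) / (y - x)"
    "\<forall>\<^sub>F y in at_right x. (f y - f x) / (y - x) \<le> A * \<theta>"
    using bounds by (simp_all add: eventually_at_right_field) (use gt_ex in blast)+
  then show ?thesis
    using tendsto_lowerbound[OF lim] tendsto_upperbound[OF lim] by simp
qed

locale hjb_barrier = hjb_equation +
  fixes A \<theta> :: real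
  assumes c_le: "c \<le> r * A" and A_nonneg: "0 \<le> A" and theta_pos: "0 < \<theta>"
    and theta_large: "\<mu> * \<theta> + r \<le> \<sigma>\<^sup>2 * \<theta>\<^sup>2 / 2"
begin

lemma barrier_second_deriv_le_rhs:
  "- A * \<theta>\<^sup>2 * exp (- \<theta> * t) \<le> rhs (barrier A \<theta> t) (A * \<theta> * exp (- \<theta> * t))"
proof -
  define e where "e = exp (- \<theta> * t)"
  have "0 < e"
    unfolding e_def by simp
  then have "c * opT b (A * \<theta> * e) \<le> r * A"
    using opT_le_1[OF b_nonneg b_le_1, of "A * \<theta> * e"] A_nonneg theta_pos c_nonneg c_le
    by (smt (verit) mult_left_le mult_nonneg_nonneg)
  then have "- A * e * (\<mu> * \<theta> + r) \<le> r * (A * (1 - e)) - \<mu> * (A * \<theta> * e) - c * opT b (A * \<theta> * e)"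
    by (simp add: algebra_simps)
  moreover have "- A * e * (\<sigma>\<^sup>2 * \<theta>\<^sup>2 / 2) \<le> - A * e * (\<mu> * \<theta> + r)"
    by (rule mult_left_mono_neg[OF theta_large]) (use A_nonneg \<open>0 < e\<close> in simp)
  ultimately have "\<sigma>\<^sup>2 / 2 * (- A * \<theta>\<^sup>2 * e) \<le> r * (A * (1 - e)) - \<mu> * (A * \<theta> * e) - c * opT b (A * \<theta> * e)"
    by (simp add: algebra_simps)
  then show ?thesis
    using sigma_pos unfolding rhs_def barrier_def e_def[symmetric] by (simp add: field_simps)
qed

lemma bounded_C1_barrier: "bounded_C1 (barrier A \<theta>) (\<lambda>x. A * \<theta> * exp (- \<theta> * x))"
  unfolding bounded_C1_def
proof (intro conjI allI impI)
  have "\<bar>barrier A \<theta> x\<bar> \<le> A" if "0 \<le> x" for x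
    using A_nonneg theta_pos that unfolding barrier_def by (simp add: abs_mult mult_left_le)
  then show "bounded (barrier A \<theta> ` {0..})"
    unfolding bounded_real by auto
  show "continuous_on {0..} (barrier A \<theta>)"
    unfolding barrier_def by (intro continuous_intros)
  show "(barrier A \<theta> has_real_derivative A * \<theta> * exp (- \<theta> * x)) (at x)" for x
    unfolding barrier_def by (rule derivative_eq_intros refl | simp)+
  show "continuous_on {0<..} (\<lambda>x. A * \<theta> * exp (- \<theta> * x))"
    by (intro continuous_intros)
qed

lemma barrier_supersolution: "supersolution (barrier A \<theta>) (\<lambda>x. A * \<theta> * exp (- \<theta> * x))"
  unfolding supersolution_def
proof (intro allI impI)
  fix x y :: real
  assume "0 < x" "x \<le> y"
  have "((\<lambda>t. - A * \<theta>\<^sup>2 * exp (- \<theta> * t)) has_integral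
      A * \<theta> * exp (- \<theta> * y) - A * \<theta> * exp (- \<theta> * x)) {x..y}"
  proof (rule fundamental_theorem_of_calculus[OF \<open>x \<le> y\<close>])
    fix t
    have "((\<lambda>t. A * \<theta> * exp (- \<theta> * t)) has_real_derivative - A * \<theta>\<^sup>2 * exp (- \<theta> * t)) (at t)"
      by (rule derivative_eq_intros refl | simp add: power2_eq_square)+
    then show "((\<lambda>t. A * \<theta> * exp (- \<theta> * t)) has_vector_derivative - A * \<theta>\<^sup>2 * exp (- \<theta> * t))
        (at t within {x..y})"
      by (simp add: has_real_derivative_iff_has_vector_derivative has_vector_derivative_at_within)
  qed
  moreover have "(\<lambda>t. rhs (barrier A \<theta> t) (A * \<theta> * exp (- \<theta> * t))) integrable_on {x..y}"
    unfolding barrier_def by (intro integrable_continuous_interval continuous_intros)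
  ultimately show "A * \<theta> * exp (- \<theta> * y) - A * \<theta> * exp (- \<theta> * x)
      \<le> integral {x..y} (\<lambda>t. rhs (barrier A \<theta> t) (A * \<theta> * exp (- \<theta> * t)))"
    using barrier_second_deriv_le_rhs by (auto intro: has_integral_le[OF _ integrable_integral])
qed

lemma controlled_step:
  assumes v: "W2p_loc v v' v''" and "bounded (v ` {0..})" and "v 0 = 0"
    and obstacle: "AE x in lborel. x > 0 \<longrightarrow>
      min (- opL \<mu> \<sigma> r (v x) (v' x) (v'' x) - c * opT b (v' x)) (v x - g x) = 0"
    and g: "continuous_on {0<..} g" "controlled A \<theta> g"
  shows "controlled A \<theta> v"
proof -
  have C1: "bounded_C1 v v'"
    using W2p_loc_bounded_C1 v \<open>bounded (v ` {0..})\<close> .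
  have sub: "subsolution_above g v v'"
    and super: "\<And>k. 0 \<le> k \<Longrightarrow> supersolution (\<lambda>x. v x + k) v'"
    using obstacle_problem_sub_super[OF v obstacle] by blast+
  have g_nonneg: "\<And>x. 0 \<le> x \<Longrightarrow> 0 \<le> g x"
    and g_mono: "\<And>x h. 0 \<le> x \<Longrightarrow> 0 \<le> h \<Longrightarrow> g x \<le> g (x + h)"
    and g_lip: "\<And>x h. 0 \<le> x \<Longrightarrow> 0 \<le> h \<Longrightarrow> g (x + h) \<le> g x + A * \<theta> * h"
    using g(2) unfolding controlled_def by simp_all
  have "g 0 \<le> barrier A \<theta> 0"
    using g(2) unfolding controlled_def by simp
  then have "g 0 \<le> 0"
    by (simp add: barrier_def)
  have "AE x in lborel. x > 0 \<longrightarrow> 0 \<le> v x - g x"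
    using obstacle by eventually_elim (auto simp: min_def split: if_splits)
  then have g_le_v: "g x \<le> v x" if "0 \<le> x" for x
    using obstacle_le_solution[OF v \<open>v 0 = 0\<close> _ g(1) \<open>g 0 \<le> 0\<close> that] by blast
  have below: "v x \<le> barrier A \<theta> x" if "0 \<le> x" for x
    by (rule comparison[OF C1 bounded_C1_barrier sub barrier_supersolution])
      (use g(2) that \<open>v 0 = 0\<close> in \<open>auto simp: controlled_def barrier_def\<close>)
  have v_h: "v h \<le> v 0 + A * \<theta> * h" if "0 \<le> h" for h
    using below[OF that] barrier_le_linear[OF A_nonneg, of \<theta> h] \<open>v 0 = 0\<close> by simp
  show ?thesis
    unfolding controlled_def
  proof (intro conjI allI impI)
    fix x h :: real
    assume "0 \<le> x"
    show "0 \<le> v x"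
      using g_nonneg[OF \<open>0 \<le> x\<close>] g_le_v[OF \<open>0 \<le> x\<close>] by simp
    show "v x \<le> barrier A \<theta> x"
      using below[OF \<open>0 \<le> x\<close>] .
    assume "0 \<le> h"
    have "supersolution v v'"
      using super[of 0] by simp
    then show "v x \<le> v (x + h)"
      using solution_mono[OF C1 sub _ g_le_v g_mono] \<open>v 0 = 0\<close> g_nonneg g_le_v \<open>0 \<le> x\<close> \<open>0 \<le> h\<close>
      by (metis order_trans)
    have "0 \<le> A * \<theta> * h"
      using A_nonneg theta_pos \<open>0 \<le> h\<close> by simp
    then show "v (x + h) \<le> v x + A * \<theta> * h"
      using solution_lipschitz[OF C1 sub super g_le_v g_lip v_h] \<open>0 \<le> x\<close> \<open>0 \<le> h\<close> by blast
  qed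
qed

end

lemma barrier_rate_exists:
  fixes \<mu> \<sigma> r :: real
  assumes "0 < \<sigma>" and "0 \<le> r"
  shows "\<exists>\<theta>>0. \<mu> * \<theta> + r \<le> \<sigma>\<^sup>2 * \<theta>\<^sup>2 / 2"
proof (intro exI conjI)
  define \<theta> where "\<theta> = max 1 (2 * (\<bar>\<mu>\<bar> + r) / \<sigma>\<^sup>2)"
  show "0 < \<theta>"
    unfolding \<theta>_def by simp
  have "2 * (\<bar>\<mu>\<bar> + r) / \<sigma>\<^sup>2 \<le> \<theta>"
    unfolding \<theta>_def by simp
  then have "2 * (\<bar>\<mu>\<bar> + r) \<le> \<sigma>\<^sup>2 * \<theta>"
    using assms(1) by (simp add: pos_divide_le_eq mult.commute)
  then have "\<theta> * (\<bar>\<mu>\<bar> + r) \<le> \<sigma>\<^sup>2 * \<theta>\<^sup>2 / 2"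
    using \<open>0 < \<theta>\<close> mult_left_mono[of "2 * (\<bar>\<mu>\<bar> + r)" "\<sigma>\<^sup>2 * \<theta>" \<theta>]
    by (simp add: power2_eq_square algebra_simps)
  moreover have "1 \<le> \<theta>"
    unfolding \<theta>_def by simp
  then have "\<mu> * \<theta> \<le> \<bar>\<mu>\<bar> * \<theta>" "r \<le> r * \<theta>"
    using mult_right_mono[of \<mu> "\<bar>\<mu>\<bar>" \<theta>] mult_left_mono[of 1 \<theta> r] assms(2) by simp_all
  ultimately show "\<mu> * \<theta> + r \<le> \<sigma>\<^sup>2 * \<theta>\<^sup>2 / 2"
    by (simp add: algebra_simps)
qed

lemma cc_bounds:
  assumes "0 < cbar" and "1 \<le> n" and "i \<le> n"
  shows "0 \<le> cc cbar n i" and "cc cbar n i \<le> cbar"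
proof -
  have "real i * (cbar / real n) \<le> real n * (cbar / real n)"
    using assms by (intro mult_right_mono) auto
  then show "0 \<le> cc cbar n i"
    using assms(2) unfolding cc_def by simp
  show "cc cbar n i \<le> cbar"
    using assms(1) unfolding cc_def by simp
qed

lemma regime_solution_controlled:
  assumes sol: "regime_solution \<mu> \<sigma> r cbar b n v v' v''"
    and barrier: "\<And>i. i \<le> n \<Longrightarrow> hjb_barrier \<mu> \<sigma> r b (cc cbar n i) A \<theta>"
    and "i \<le> n"
  shows "controlled A \<theta> (v i)"
proof -
  have data: "W2p_loc (v j) (v' j) (v'' j) \<and> bounded (v j ` {0..}) \<and> v j 0 = 0 \<and>
      (AE x in lborel. 0 < x \<longrightarrow> min (- opL \<mu> \<sigma> r (v j x) (v' j x) (v'' j x) - cc cbar n j * opT b (v' j x))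
        (v j x - (if j = 0 then 0 else v (j - 1) x)) = 0)" if "j \<le> n" for j
    using sol that unfolding regime_solution_def by blast
  show ?thesis
    using \<open>i \<le> n\<close>
  proof (induction i)
    case 0
    have "controlled A \<theta> (\<lambda>_. 0)"
      using barrier[of 0] by (intro controlled_zero) (simp_all add: hjb_barrier_def hjb_barrier_axioms_def)
    then show ?case
      using hjb_barrier.controlled_step[OF barrier[of 0], of "v 0" "v' 0" "v'' 0" "\<lambda>_. 0"] data[of 0]
      by simp
  next
    case (Suc i)
    then have "controlled A \<theta> (v i)"
      by simp
    have "continuous_on {0<..} (v i)"
      by (rule continuous_on_subset[OF W2p_loc_continuous_on]) (use data[of i] Suc.prems in auto)
    then show ?case
      using hjb_barrier.controlled_step[OF barrier[OF Suc.prems], of "v (Suc i)" "v' (Suc i)" "v'' (Suc i)" "v i"]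
        data[OF Suc.prems] \<open>controlled A \<theta> (v i)\<close> by simp
  qed
qed

theorem lemma5p8:
  fixes \<mu> \<sigma> r cbar b :: real
  assumes "\<sigma> > 0" and "r > 0" and "0 < cbar" and "cbar \<le> \<mu>" and "0 \<le> b" and "b \<le> 1"
    and "2 * \<mu> * cbar > \<sigma>\<^sup>2 * r"
  shows "\<exists>K>0. \<forall>n::nat. \<forall>v v' v''. n \<ge> 1 \<longrightarrow> regime_solution \<mu> \<sigma> r cbar b n v v' v'' \<longrightarrow>
           (\<forall>i\<le>n. \<forall>x\<ge>0. 0 \<le> v' i x \<and> v' i x \<le> K)"
proof -
  obtain \<theta> where "0 < \<theta>" and "\<mu> * \<theta> + r \<le> \<sigma>\<^sup>2 * \<theta>\<^sup>2 / 2"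
    using barrier_rate_exists[of \<sigma> r \<mu>] assms(1,2) by auto
  define A where "A = cbar / r"
  have barrier: "hjb_barrier \<mu> \<sigma> r b (cc cbar n i) A \<theta>" if "1 \<le> n" "i \<le> n" for n i
    using assms cc_bounds[OF assms(3) that] \<open>0 < \<theta>\<close> \<open>\<mu> * \<theta> + r \<le> \<sigma>\<^sup>2 * \<theta>\<^sup>2 / 2\<close>
    unfolding hjb_barrier_def hjb_barrier_axioms_def hjb_equation_def A_def by simp
  show ?thesis
  proof (intro exI[of _ "A * \<theta>"] conjI allI impI)
    show "0 < A * \<theta>"
      using assms(2,3) \<open>0 < \<theta>\<close> unfolding A_def by simp
    fix n v v' v'' i and x :: real
    assume "1 \<le> n" and sol: "regime_solution \<mu> \<sigma> r cbar b n v v' v''" and "i \<le> n" and "0 \<le> x"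
    have "controlled A \<theta> (v i)"
      using regime_solution_controlled[OF sol barrier[OF \<open>1 \<le> n\<close>] \<open>i \<le> n\<close>] .
    moreover have "(v i has_real_derivative v' i x) (at x within {0..})"
      using sol \<open>i \<le> n\<close> \<open>0 \<le> x\<close> unfolding regime_solution_def W2p_loc_def by simp
    ultimately show "0 \<le> v' i x" "v' i x \<le> A * \<theta>"
      using controlled_deriv_bounds \<open>0 \<le> x\<close> by blast+
  qed
qed

end
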